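(* For each prime power $q$, there exists an $[n,3]_q$ MWS code with $n\le\frac{q-1}{2}\left(q^3+q^2+q\right)$.
   Context: An $[n,k]_q$ code is a $k$-dimensional subspace of $\mathbb{F}_q^n$, non-degenerate (no coordinate identically zero on the code). It is MWS if the set of its non-zero Hamming weights has cardinality $\frac{q^k-1}{q-1}$. *)

theory Defs
  imports Complex_Main
begin

text \<open>Vectors of \<open>F^n\<close> are represented as functions \<open>nat \<Rightarrow> 'a\<close> vanishing at all
  coordinates \<open>\<ge> n\<close>; coordinates are \<open>0..<n\<close>.\<close>

definition in_Fn :: "nat \<Rightarrow> (nat \<Rightarrow> 'a::zero) \<Rightarrow> bool" where
  "in_Fn n x \<longleftrightarrow> (\<forall>j\<ge>n. x j = 0)"

definition is_subspace_dim :: "nat \<Rightarrow> nat \<Rightarrow> (nat \<Rightarrow> 'a::field) set \<Rightarrow> bool" where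
  "is_subspace_dim n k C \<longleftrightarrow>
     (\<exists>b :: nat \<Rightarrow> nat \<Rightarrow> 'a.
        (\<forall>i<k. in_Fn n (b i)) \<and>
        (\<forall>c :: nat \<Rightarrow> 'a. (\<forall>j. (\<Sum>i<k. c i * b i j) = 0) \<longrightarrow> (\<forall>i<k. c i = 0)) \<and>
        C = {x. \<exists>c :: nat \<Rightarrow> 'a. \<forall>j. x j = (\<Sum>i<k. c i * b i j)})"

definition is_linear_code :: "nat \<Rightarrow> nat \<Rightarrow> (nat \<Rightarrow> 'a::field) set \<Rightarrow> bool" where
  "is_linear_code n k C \<longleftrightarrow>
     is_subspace_dim n k C \<and> (\<forall>j<n. \<exists>x\<in>C. x j \<noteq> 0)"

definition hamming_wt :: "nat \<Rightarrow> (nat \<Rightarrow> 'a::zero) \<Rightarrow> nat" where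
  "hamming_wt n x = card {j. j < n \<and> x j \<noteq> 0}"

definition nonzero_weights :: "nat \<Rightarrow> (nat \<Rightarrow> 'a::zero) set \<Rightarrow> nat set" where
  "nonzero_weights n C = hamming_wt n ` (C - {\<lambda>_. 0})"

definition is_MWS_code :: "nat \<Rightarrow> nat \<Rightarrow> (nat \<Rightarrow> 'a::{field,finite}) set \<Rightarrow> bool" where
  "is_MWS_code n k C \<longleftrightarrow>
     is_linear_code n k C \<and>
     card (nonzero_weights n C) = (card (UNIV :: 'a set) ^ k - 1) div (card (UNIV :: 'a set) - 1)"

end

theory Submission
  imports Defs "HOL-Library.Multiset"
begin

text \<open>The columns of a generator matrix of a 3-dimensional code are points \<open>v\<close> of the plane over
  \<open>F_q\<close>, and the codeword with coefficient vector \<open>c\<close> vanishes exactly at the columns lying on the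
  line \<open>c \<bullet> v = 0\<close>. So the nonzero weights are \<open>n\<close> minus the number of columns on each of the
  \<open>q^2 + q + 1\<close> lines, and the code is MWS once distinct lines carry distinct numbers of columns.

  Such a multiset of columns lives on the sides of the coordinate triangle: \<open>(1,s,0)\<close> is taken
  \<open>f(s)\<close> times, \<open>(1,0,s)\<close> \<open>q f(s)\<close> times and \<open>(0,1,s)\<close> \<open>q^2 h(s)\<close> times, where \<open>f\<close> maps the
  nonzero field elements bijectively onto \<open>{0,2,3,...,q-1}\<close> and \<open>h\<close> onto \<open>{1,...,q-1}\<close>; add
  \<open>q\<close> copies of \<open>(1,0,0)\<close> and one \<open>(0,0,1)\<close>. A line through no vertex meets every side once, so
  its count has the base-\<open>q\<close> digits \<open>f, f, h\<close>, which determine the line. The remaining lines are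
  told apart by whether their count reaches \<open>q^2\<close>, by its residue mod \<open>q\<close>, and by a few direct
  comparisons. There are \<open>q(q-1)(q^2+q+1)/2\<close> columns in total.\<close>

fun dot3 :: "'a::comm_semiring_1 \<times> 'a \<times> 'a \<Rightarrow> 'a \<times> 'a \<times> 'a \<Rightarrow> 'a" where
  "dot3 (a, b, c) (x, y, z) = a * x + b * y + c * z"

lemma dot3_zero_left [simp]: "dot3 (0, 0, 0) v = 0"
  by (cases v) simp

lemma dot3_scale: "dot3 (k * a, k * b, k * c) v = k * dot3 (a, b, c) v"
  by (cases v) (simp add: algebra_simps)

definition codeword :: "('a::field \<times> 'a \<times> 'a) list \<Rightarrow> 'a \<times> 'a \<times> 'a \<Rightarrow> nat \<Rightarrow> 'a" where
  "codeword cols c j = (if j < length cols then dot3 c (cols ! j) else 0)"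

definition zero_count :: "('a::field \<times> 'a \<times> 'a) multiset \<Rightarrow> 'a \<times> 'a \<times> 'a \<Rightarrow> nat" where
  "zero_count M c = size (filter_mset (\<lambda>v. dot3 c v = 0) M)"

lemma zero_count_add [simp]: "zero_count (M + N) c = zero_count M c + zero_count N c"
  by (simp add: zero_count_def)

lemma zero_count_sum: "zero_count (\<Sum>x\<in>A. M x) c = (\<Sum>x\<in>A. zero_count (M x) c)"
  using sum_comp_morphism[of "\<lambda>M. zero_count M c" M A] by (simp add: o_def zero_count_def)

lemma zero_count_replicate_mset [simp]:
  "zero_count (replicate_mset n v) c = (if dot3 c v = 0 then n else 0)"
  by (induction n) (simp_all add: zero_count_def)

lemma zero_count_empty [simp]: "zero_count {#} c = 0"
  by (simp add: zero_count_def)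

lemma zero_count_add_mset [simp]:
  "zero_count (add_mset v M) c = (if dot3 c v = 0 then 1 else 0) + zero_count M c"
  by (simp add: zero_count_def)

definition unit3 :: "nat \<Rightarrow> 'a::zero_neq_one \<times> 'a \<times> 'a" where
  "unit3 i = (if i = 0 then (1, 0, 0) else if i = 1 then (0, 1, 0) else (0, 0, 1))"

lemma codeword_unit3_sum:
  "(\<Sum>i<3. c i * codeword cols (unit3 i) j) = codeword cols (c 0, c 1, c 2) j"
  by (cases "cols ! j") (simp add: codeword_def unit3_def eval_nat_numeral)

lemma codeword_span_eq_range:
  "{x. \<exists>c. \<forall>j. x j = (\<Sum>i<3. c i * codeword cols (unit3 i) j)} = range (codeword cols)"
proof (intro set_eqI iffI)
  fix x assume "x \<in> {x. \<exists>c. \<forall>j. x j = (\<Sum>i<3. c i * codeword cols (unit3 i) j)}"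
  then obtain c :: "nat \<Rightarrow> 'a" where "\<forall>j. x j = codeword cols (c 0, c 1, c 2) j"
    by (auto simp: codeword_unit3_sum)
  then show "x \<in> range (codeword cols)"
    by (auto simp: fun_eq_iff)
next
  fix x assume "x \<in> range (codeword cols)"
  then obtain a b c where x: "x = codeword cols (a, b, c)"
    by (metis rangeE prod_cases3)
  define f :: "nat \<Rightarrow> 'a" where "f i = (if i = 0 then a else if i = 1 then b else c)" for i
  have "\<forall>j. x j = (\<Sum>i<3. f i * codeword cols (unit3 i) j)"
    by (simp only: codeword_unit3_sum) (simp add: x f_def)
  then show "x \<in> {x. \<exists>c. \<forall>j. x j = (\<Sum>i<3. c i * codeword cols (unit3 i) j)}"
    by blast
qed

lemma codeword_eq_zero_iff:
  assumes spanning: "\<And>c. (\<forall>v\<in>set cols. dot3 c v = 0) \<Longrightarrow> c = (0, 0, 0)"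
  shows "codeword cols c = (\<lambda>_. 0) \<longleftrightarrow> c = (0, 0, 0)"
proof
  assume zero: "codeword cols c = (\<lambda>_. 0)"
  have "dot3 c v = 0" if "v \<in> set cols" for v
  proof -
    obtain j where "j < length cols" "v = cols ! j"
      using \<open>v \<in> set cols\<close> by (auto simp: in_set_conv_nth)
    then show ?thesis
      using fun_cong[OF zero, of j] by (simp add: codeword_def)
  qed
  then show "c = (0, 0, 0)"
    using spanning by blast
next
  assume "c = (0, 0, 0)"
  then show "codeword cols c = (\<lambda>_. 0)"
    by (simp add: fun_eq_iff codeword_def)
qed

lemma is_subspace_dim_codewords:
  assumes spanning: "\<And>c. (\<forall>v\<in>set cols. dot3 c v = 0) \<Longrightarrow> c = (0, 0, 0)"
  shows "is_subspace_dim (length cols) 3 (range (codeword cols))"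
  unfolding is_subspace_dim_def codeword_span_eq_range[symmetric]
proof (intro exI conjI allI impI)
  show "in_Fn (length cols) (codeword cols (unit3 i))" for i
    by (simp add: in_Fn_def codeword_def)
next
  fix c :: "nat \<Rightarrow> 'a" and i :: nat
  assume "\<forall>j. (\<Sum>i<3. c i * codeword cols (unit3 i) j) = 0" and "i < 3"
  then have "codeword cols (c 0, c 1, c 2) = (\<lambda>_. 0)"
    by (simp add: codeword_unit3_sum fun_eq_iff)
  then have "(c 0, c 1, c 2) = (0, 0, 0)"
    using codeword_eq_zero_iff[OF spanning] by blast
  with \<open>i < 3\<close> show "c i = 0"
    by (auto simp: eval_nat_numeral less_Suc_eq)
qed (rule refl)

lemma hamming_wt_codeword:
  "hamming_wt (length cols) (codeword cols c) = length cols - zero_count (mset cols) c"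
proof -
  have "hamming_wt (length cols) (codeword cols c) = length (filter (\<lambda>v. dot3 c v \<noteq> 0) cols)"
    unfolding hamming_wt_def length_filter_conv_card codeword_def
    by (metis (lifting))
  moreover have "length (filter (\<lambda>v. dot3 c v \<noteq> 0) cols) + zero_count (mset cols) c = length cols"
    using sum_length_filter_compl[of "\<lambda>v. dot3 c v = 0" cols]
    by (simp add: zero_count_def flip: mset_filter)
  ultimately show ?thesis
    by simp
qed

lemma zero_count_scale:
  "k \<noteq> 0 \<Longrightarrow> zero_count M (k * a, k * b, k * c) = zero_count M (a, b, c)"
  by (simp add: zero_count_def dot3_scale)

definition normalized_vectors :: "('a::field \<times> 'a \<times> 'a) set" where
  "normalized_vectors = range (\<lambda>(a, b). (1, a, b)) \<union> range (\<lambda>b. (0, 1, b)) \<union> {(0, 0, 1)}"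

lemma normalized_multipleE:
  assumes "(c0, c1, c2) \<noteq> (0, 0, 0)"
  obtains k a b c where "k \<noteq> 0" "(a, b, c) \<in> normalized_vectors" "(c0, c1, c2) = (k * a, k * b, k * c)"
proof (cases "c0 = 0")
  case False
  then show ?thesis
    by (intro that[of c0 1 "c1 / c0" "c2 / c0"]) (auto simp: normalized_vectors_def)
next
  case c0: True
  show ?thesis
  proof (cases "c1 = 0")
    case False
    with c0 show ?thesis
      by (intro that[of c1 0 1 "c2 / c1"]) (auto simp: normalized_vectors_def)
  next
    case True
    with c0 assms show ?thesis
      by (intro that[of c2 0 0 1]) (auto simp: normalized_vectors_def)
  qed
qed

lemma card_normalized_vectors:
  "card (normalized_vectors :: ('a::{field,finite} \<times> 'a \<times> 'a) set)
     = card (UNIV :: 'a set)^2 + card (UNIV :: 'a set) + 1"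
proof -
  let ?A = "range (\<lambda>(a, b). (1::'a, a::'a, b::'a))" and ?B = "range (\<lambda>b. (0::'a, 1::'a, b::'a))"
  have "card ?A = card (UNIV :: ('a \<times> 'a) set)"
    by (subst card_image) (auto simp: inj_on_def)
  also have "\<dots> = card (UNIV :: 'a set)^2"
    by (metis UNIV_Times_UNIV card_cartesian_product power2_eq_square)
  finally have A: "card ?A = card (UNIV :: 'a set)^2" .
  have B: "card ?B = card (UNIV :: 'a set)"
    by (subst card_image) (auto simp: inj_on_def)
  have "card (?A \<union> ?B) = card ?A + card ?B"
    by (rule card_Un_disjoint) auto
  moreover have "card (?A \<union> ?B \<union> {(0, 0, 1)}) = card (?A \<union> ?B) + 1"
    by (subst card_Un_disjoint) auto
  ultimately show ?thesis
    unfolding normalized_vectors_def A B by presburger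
qed

lemma card_UNIV_field_ge_2: "2 \<le> card (UNIV :: 'a::{field,finite} set)"
proof -
  have "card {0::'a, 1} \<le> card (UNIV :: 'a set)"
    by (rule card_mono) auto
  then show ?thesis
    by simp
qed

lemma projective_plane_size:
  fixes q :: nat
  assumes "2 \<le> q"
  shows "(q^3 - 1) div (q - 1) = q^2 + q + 1"
proof -
  have factor: "q^3 - 1 = (q - 1) * (q^2 + q + 1)"
    using assms by (cases q) (simp_all add: eval_nat_numeral algebra_simps)
  have "q - 1 \<noteq> 0"
    using assms by simp
  then show ?thesis
    unfolding factor by (rule nonzero_mult_div_cancel_left)
qed

lemma nonzero_weights_codewords:
  assumes spanning: "\<And>c. (\<forall>v\<in>set cols. dot3 c v = 0) \<Longrightarrow> c = (0, 0, 0)"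
  shows "nonzero_weights (length cols) (range (codeword cols))
           = (\<lambda>r. length cols - zero_count (mset cols) r) ` normalized_vectors"
proof (intro set_eqI iffI)
  fix w assume "w \<in> nonzero_weights (length cols) (range (codeword cols))"
  then obtain c0 c1 c2 where c: "codeword cols (c0, c1, c2) \<noteq> (\<lambda>_. 0)"
    and w: "w = hamming_wt (length cols) (codeword cols (c0, c1, c2))"
    unfolding nonzero_weights_def by (auto simp: image_iff)
  then have "(c0, c1, c2) \<noteq> (0, 0, 0)"
    using codeword_eq_zero_iff[OF spanning] by blast
  then obtain k a b c where "k \<noteq> 0" "(a, b, c) \<in> normalized_vectors"
    and "(c0, c1, c2) = (k * a, k * b, k * c)"
    by (rule normalized_multipleE)
  then show "w \<in> (\<lambda>r. length cols - zero_count (mset cols) r) ` normalized_vectors"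
    using w by (auto simp: hamming_wt_codeword zero_count_scale)
next
  fix w assume "w \<in> (\<lambda>r. length cols - zero_count (mset cols) r) ` normalized_vectors"
  then obtain r where r: "r \<in> normalized_vectors" "w = length cols - zero_count (mset cols) r"
    by auto
  then have "codeword cols r \<noteq> (\<lambda>_. 0)"
    using codeword_eq_zero_iff[OF spanning] by (auto simp: normalized_vectors_def)
  then show "w \<in> nonzero_weights (length cols) (range (codeword cols))"
    using r unfolding nonzero_weights_def
    by (auto simp: hamming_wt_codeword intro!: image_eqI[of _ _ "codeword cols r"])
qed

theorem is_MWS_code_codewords:
  fixes cols :: "('a::{field,finite} \<times> 'a \<times> 'a) list"
  assumes nonzero: "(0, 0, 0) \<notin> set cols"
    and spanning: "\<And>c. (\<forall>v\<in>set cols. dot3 c v = 0) \<Longrightarrow> c = (0, 0, 0)"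
    and distinct_zero_counts: "inj_on (zero_count (mset cols)) normalized_vectors"
  shows "is_MWS_code (length cols) 3 (range (codeword cols))"
proof -
  let ?n = "length cols" and ?q = "card (UNIV :: 'a set)"
  have "\<exists>x\<in>range (codeword cols). x j \<noteq> 0" if "j < ?n" for j
  proof -
    obtain a b c where col: "cols ! j = (a, b, c)"
      by (rule prod_cases3)
    with nonzero \<open>j < ?n\<close> have "(a, b, c) \<noteq> (0, 0, 0)"
      using nth_mem by fastforce
    then have "\<exists>e \<in> {(1, 0, 0), (0, 1, 0), (0, 0, 1)}. codeword cols e j \<noteq> 0"
      using \<open>j < ?n\<close> col by (auto simp: codeword_def)
    then show ?thesis
      by blast
  qed
  then have "is_linear_code ?n 3 (range (codeword cols))"
    using is_subspace_dim_codewords[OF spanning] by (simp add: is_linear_code_def)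
  moreover have "inj_on (\<lambda>r. ?n - zero_count (mset cols) r) normalized_vectors"
  proof (rule inj_onI)
    fix r s assume "r \<in> normalized_vectors" "s \<in> normalized_vectors"
      and "?n - zero_count (mset cols) r = ?n - zero_count (mset cols) s"
    moreover have "zero_count (mset cols) t \<le> ?n" for t
      by (simp add: zero_count_def flip: size_mset)
    ultimately show "r = s"
      using distinct_zero_counts by (simp add: inj_on_def) (metis diff_diff_cancel)
  qed
  then have "card (nonzero_weights ?n (range (codeword cols))) = ?q^2 + ?q + 1"
    by (simp add: nonzero_weights_codewords[OF spanning] card_image card_normalized_vectors)
  moreover have "(?q^3 - 1) div (?q - 1) = ?q^2 + ?q + 1"
    using projective_plane_size card_UNIV_field_ge_2 by blast
  ultimately show ?thesis
    by (simp add: is_MWS_code_def)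
qed

lemma sum_nonzero_if_linear_root:
  fixes a b :: "'a::{field,finite}"
  assumes "a \<noteq> 0" "b \<noteq> 0"
  shows "(\<Sum>s\<in>-{0}. if a + b * s = 0 then m s else 0) = m (- a / b)"
proof -
  have "a + b * s = 0 \<longleftrightarrow> s = - a / b" for s
    using assms(2) by (auto simp: add_eq_0_iff field_simps)
  moreover have "- a / b \<noteq> 0"
    using assms by simp
  ultimately show ?thesis
    by (simp add: sum.delta')
qed

lemma base_q_digits:
  fixes q f g h :: nat
  assumes "f < q" "g < q"
  shows "(f + q * g + q^2 * h) mod q = f"
    and "(f + q * g + q^2 * h) div q mod q = g"
proof -
  have split: "f + q * g + q^2 * h = f + q * (g + q * h)"
    by (simp add: power2_eq_square algebra_simps)
  show "(f + q * g + q^2 * h) mod q = f"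
    unfolding split using assms(1) by simp
  have div_q: "(f + q * g + q^2 * h) div q = g + q * h"
    unfolding split using assms(1) by simp
  then show "(f + q * g + q^2 * h) div q mod q = g"
    using assms(2) by simp
qed

lemma base_q_digits_eq:
  fixes q f g h f' g' h' :: nat
  assumes "f < q" "g < q" "f' < q" "g' < q" "f + q * g + q^2 * h = f' + q * g' + q^2 * h'"
  shows "f = f'" "g = g'"
  using base_q_digits[OF assms(1,2), of h] base_q_digits[OF assms(3,4), of h'] assms(5)
  by simp_all

lemma double_sum_Suc: "2 * (\<Sum>i<m. i + 1) = m * (m + 1 :: nat)"
  by (induction m) simp_all

lemma sum_Suc_skipping_1:
  "0 < m \<Longrightarrow> (\<Sum>i<m. i + 1) = (\<Sum>i<m. if i = 0 then 0 else i + 1) + (1 :: nat)"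
  by (induction m) (auto simp: not_less_eq)

definition generic_lines :: "('a::field \<times> 'a \<times> 'a) set" where
  "generic_lines = {(1, a, b) |a b. a \<noteq> 0 \<and> b \<noteq> 0}"

definition lines_through_100 :: "('a::field \<times> 'a \<times> 'a) set" where
  "lines_through_100 = {(0, 1, b) |b. b \<noteq> 0}"

definition lines_through_010 :: "('a::field \<times> 'a \<times> 'a) set" where
  "lines_through_010 = {(1, 0, b) |b. b \<noteq> 0}"

definition lines_through_001 :: "('a::field \<times> 'a \<times> 'a) set" where
  "lines_through_001 = {(1, a, 0) |a. a \<noteq> 0}"

lemma normalized_vectors_cases:
  "normalized_vectors =
     (generic_lines \<union> lines_through_100 \<union> {(1, 0, 0)})
     \<union> (lines_through_001 \<union> lines_through_010 \<union> {(0, 0, 1)}) \<union> {(0, 1, 0)}"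
  by (auto simp: normalized_vectors_def generic_lines_def lines_through_100_def
      lines_through_010_def lines_through_001_def)

lemma inj_on_Un_distinct_values:
  assumes "inj_on f A" "inj_on f B" "\<And>x y. x \<in> A \<Longrightarrow> y \<in> B \<Longrightarrow> f x \<noteq> f y"
  shows "inj_on f (A \<union> B)"
  using assms by (auto simp: inj_on_Un)

locale weighted_triangle =
  fixes q :: nat and phi :: "'a::{field,finite} \<Rightarrow> nat"
  assumes q_def: "q = card (UNIV :: 'a set)"
    and phi_bij: "bij_betw phi (-{0}) {..<q - 1}"
begin

text \<open>Skipping the digit 1 keeps generic lines apart from the lines through \<open>(1,0,0)\<close>, whose
  middle digit is 1, and from the sides \<open>x = 0\<close>, \<open>y = 0\<close>, whose counts are \<open>1\<close> mod \<open>q\<close>.\<close>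

definition nonunit_digit :: "'a \<Rightarrow> nat" where
  "nonunit_digit s = (if phi s = 0 then 0 else phi s + 1)"

definition positive_digit :: "'a \<Rightarrow> nat" where
  "positive_digit s = phi s + 1"

definition digit_sum :: nat where
  "digit_sum = (\<Sum>s\<in>-{0}. nonunit_digit s)"

definition points :: "('a \<times> 'a \<times> 'a) multiset" where
  "points = (\<Sum>s\<in>-{0}. replicate_mset (nonunit_digit s) (1, s, 0)
                      + replicate_mset (q * nonunit_digit s) (1, 0, s)
                      + replicate_mset (q^2 * positive_digit s) (0, 1, s))
            + replicate_mset q (1, 0, 0) + {#(0, 0, 1)#}"

lemma q_ge_2: "2 \<le> q"
  using card_UNIV_field_ge_2 q_def by simp

lemma phi_less: "s \<noteq> 0 \<Longrightarrow> phi s < q - 1"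
  using phi_bij by (auto simp: bij_betw_def)

lemma phi_inj: "s \<noteq> 0 \<Longrightarrow> t \<noteq> 0 \<Longrightarrow> phi s = phi t \<Longrightarrow> s = t"
  using phi_bij by (auto simp: bij_betw_def inj_on_def)

lemma nonunit_digit_less: "s \<noteq> 0 \<Longrightarrow> nonunit_digit s < q"
  using phi_less[of s] by (auto simp: nonunit_digit_def)

lemma nonunit_digit_neq_1 [simp]: "nonunit_digit s \<noteq> 1"
  by (simp add: nonunit_digit_def)

lemma nonunit_digit_inj: "s \<noteq> 0 \<Longrightarrow> t \<noteq> 0 \<Longrightarrow> nonunit_digit s = nonunit_digit t \<Longrightarrow> s = t"
  by (auto simp: nonunit_digit_def split: if_splits intro: phi_inj)

lemma positive_digit_inj: "s \<noteq> 0 \<Longrightarrow> t \<noteq> 0 \<Longrightarrow> positive_digit s = positive_digit t \<Longrightarrow> s = t"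
  by (simp add: positive_digit_def phi_inj)

lemma sum_positive_digit: "(\<Sum>s\<in>-{0}. positive_digit s) = digit_sum + 1"
proof -
  have "0 < q - 1"
    using q_ge_2 by simp
  then have "(\<Sum>i<q - 1. i + 1) = (\<Sum>i<q - 1. if i = 0 then 0 else i + 1) + 1"
    by (rule sum_Suc_skipping_1)
  then show ?thesis
    unfolding digit_sum_def nonunit_digit_def positive_digit_def
    using sum.reindex_bij_betw[OF phi_bij, of "\<lambda>i. i + 1"]
      sum.reindex_bij_betw[OF phi_bij, of "\<lambda>i. if i = 0 then 0 else i + 1"]
    by simp
qed

lemma two_digit_sum: "2 * digit_sum + 2 = q * (q - 1)"
proof -
  have "2 * (\<Sum>s\<in>-{0}. positive_digit s) = 2 * (\<Sum>i<q - 1. i + 1)"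
    unfolding positive_digit_def using sum.reindex_bij_betw[OF phi_bij, of "\<lambda>i. i + 1"] by simp
  also have "\<dots> = q * (q - 1)"
    using double_sum_Suc[of "q - 1"] q_ge_2 by simp
  finally show ?thesis
    by (simp add: sum_positive_digit)
qed

lemma zero_count_points:
  "zero_count points c =
     (\<Sum>s\<in>-{0}. (if dot3 c (1, s, 0) = 0 then nonunit_digit s else 0))
   + (\<Sum>s\<in>-{0}. (if dot3 c (1, 0, s) = 0 then q * nonunit_digit s else 0))
   + (\<Sum>s\<in>-{0}. (if dot3 c (0, 1, s) = 0 then q^2 * positive_digit s else 0))
   + (if dot3 c (1, 0, 0) = 0 then q else 0) + (if dot3 c (0, 0, 1) = 0 then 1 else 0)"
  by (simp add: points_def zero_count_sum sum.distrib)

lemma le_mult_positive_digit: "n \<le> n * positive_digit s"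
  by (simp add: positive_digit_def)

lemma zero_count_1ab:
  "a \<noteq> 0 \<Longrightarrow> b \<noteq> 0 \<Longrightarrow> zero_count points (1, a, b)
     = nonunit_digit (- 1 / a) + q * nonunit_digit (- 1 / b) + q^2 * positive_digit (- a / b)"
  by (simp add: zero_count_points sum_nonzero_if_linear_root)

lemma zero_count_1a0: "a \<noteq> 0 \<Longrightarrow> zero_count points (1, a, 0) = nonunit_digit (- 1 / a) + 1"
  by (simp add: zero_count_points sum_nonzero_if_linear_root)

lemma zero_count_10b: "b \<noteq> 0 \<Longrightarrow> zero_count points (1, 0, b) = q * nonunit_digit (- 1 / b)"
  by (simp add: zero_count_points sum_nonzero_if_linear_root)

lemma zero_count_01b: "b \<noteq> 0 \<Longrightarrow> zero_count points (0, 1, b) = q^2 * positive_digit (- 1 / b) + q"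
  by (simp add: zero_count_points sum_nonzero_if_linear_root)

lemma zero_count_100: "zero_count points (1, 0, 0) = q^2 * (digit_sum + 1) + 1"
  by (simp add: zero_count_points sum_positive_digit flip: sum_distrib_left)

lemma zero_count_010: "zero_count points (0, 1, 0) = q * digit_sum + q + 1"
  by (simp add: zero_count_points digit_sum_def flip: sum_distrib_left)

lemma zero_count_001: "zero_count points (0, 0, 1) = digit_sum + q"
  by (simp add: zero_count_points digit_sum_def)

lemma generic_lines_zero_count:
  assumes "x \<in> generic_lines"
  shows "q^2 \<le> zero_count points x"
    and "zero_count points x mod q \<noteq> 1"
    and "zero_count points x div q mod q \<noteq> 1"
proof -
  obtain a b where "x = (1, a, b)" "a \<noteq> 0" "b \<noteq> 0"
    using assms by (auto simp: generic_lines_def)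
  let ?f = "nonunit_digit (- 1 / a)" and ?g = "nonunit_digit (- 1 / b)"
    and ?h = "positive_digit (- a / b)"
  have Z: "zero_count points x = ?f + q * ?g + q^2 * ?h"
    using \<open>x = (1, a, b)\<close> \<open>a \<noteq> 0\<close> \<open>b \<noteq> 0\<close> by (simp add: zero_count_1ab)
  have "?f < q" "?g < q"
    using \<open>a \<noteq> 0\<close> \<open>b \<noteq> 0\<close> by (simp_all add: nonunit_digit_less)
  note digits = base_q_digits[OF this, of ?h]
  show "q^2 \<le> zero_count points x"
    unfolding Z using le_mult_positive_digit[of "q^2" "- a / b"] by linarith
  show "zero_count points x mod q \<noteq> 1" "zero_count points x div q mod q \<noteq> 1"
    unfolding Z digits by (simp_all add: nonunit_digit_def)
qed

lemma inj_on_zero_count_generic_lines: "inj_on (zero_count points) generic_lines"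
proof (rule inj_onI)
  fix x y
  assume "x \<in> generic_lines" "y \<in> generic_lines" and eq: "zero_count points x = zero_count points y"
  then obtain a b c d where x: "x = (1, a, b)" and y: "y = (1, c, d)"
    and nz: "a \<noteq> 0" "b \<noteq> 0" "c \<noteq> 0" "d \<noteq> 0"
    by (auto simp: generic_lines_def)
  have "nonunit_digit (- 1 / a) + q * nonunit_digit (- 1 / b) + q^2 * positive_digit (- a / b)
      = nonunit_digit (- 1 / c) + q * nonunit_digit (- 1 / d) + q^2 * positive_digit (- c / d)"
    using eq unfolding x y zero_count_1ab[OF nz(1,2)] zero_count_1ab[OF nz(3,4)] .
  note digits_eq = base_q_digits_eq[OF _ _ _ _ this]
  have "nonunit_digit (- 1 / a) = nonunit_digit (- 1 / c)"
    by (rule digits_eq(1)) (simp_all add: nz nonunit_digit_less)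
  then have "- 1 / a = - 1 / c"
    by (rule nonunit_digit_inj[rotated 2]) (simp_all add: nz)
  moreover have "nonunit_digit (- 1 / b) = nonunit_digit (- 1 / d)"
    by (rule digits_eq(2)) (simp_all add: nz nonunit_digit_less)
  then have "- 1 / b = - 1 / d"
    by (rule nonunit_digit_inj[rotated 2]) (simp_all add: nz)
  ultimately show "x = y"
    unfolding x y by simp
qed

lemma lines_through_100_zero_count:
  assumes "x \<in> lines_through_100"
  shows "q^2 \<le> zero_count points x"
    and "zero_count points x mod q = 0"
    and "zero_count points x div q mod q = 1"
proof -
  obtain b where "x = (0, 1, b)" "b \<noteq> 0"
    using assms by (auto simp: lines_through_100_def)
  then have Z: "zero_count points x = 0 + q * 1 + q^2 * positive_digit (- 1 / b)"
    by (simp add: zero_count_01b)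
  have "0 < q" "1 < q"
    using q_ge_2 by simp_all
  note digits = base_q_digits[OF this, of "positive_digit (- 1 / b)"]
  show "q^2 \<le> zero_count points x"
    unfolding Z using le_mult_positive_digit[of "q^2" "- 1 / b"] by linarith
  show "zero_count points x mod q = 0" "zero_count points x div q mod q = 1"
    unfolding Z digits by simp_all
qed

lemma inj_on_zero_count_lines_through_100: "inj_on (zero_count points) lines_through_100"
proof (rule inj_onI)
  fix x y
  assume "x \<in> lines_through_100" "y \<in> lines_through_100" "zero_count points x = zero_count points y"
  then obtain b d where "x = (0, 1, b)" "y = (0, 1, d)" "b \<noteq> 0" "d \<noteq> 0"
    and "positive_digit (- 1 / b) = positive_digit (- 1 / d)"
    using q_ge_2 by (auto simp: lines_through_100_def zero_count_01b)
  moreover from this have "- 1 / b = - 1 / d"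
    by (intro positive_digit_inj) simp_all
  ultimately show "x = y"
    by simp
qed

lemma zero_count_100_digits:
  shows "q^2 \<le> zero_count points (1, 0, 0)"
    and "zero_count points (1, 0, 0) mod q = 1"
proof -
  have Z: "zero_count points (1, 0, 0) = Suc (q * (q * (digit_sum + 1)))"
    by (simp add: zero_count_100 power2_eq_square algebra_simps)
  show "q^2 \<le> zero_count points (1, 0, 0)"
    by (simp add: zero_count_100)
  show "zero_count points (1, 0, 0) mod q = 1"
    unfolding Z by (rule Suc_times_mod_eq) (use q_ge_2 in simp)
qed

lemma zero_count_010_digits:
  shows "q < zero_count points (0, 1, 0)"
    and "zero_count points (0, 1, 0) mod q = 1"
proof -
  have Z: "zero_count points (0, 1, 0) = Suc (q * (digit_sum + 1))"
    by (simp add: zero_count_010)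
  show "q < zero_count points (0, 1, 0)"
    unfolding Z by simp
  show "zero_count points (0, 1, 0) mod q = 1"
    unfolding Z by (rule Suc_times_mod_eq) (use q_ge_2 in simp)
qed

lemma lines_through_001_zero_count:
  assumes "x \<in> lines_through_001"
  shows "0 < zero_count points x" and "zero_count points x \<le> q"
    and "zero_count points x \<noteq> zero_count points (0, 0, 1)"
proof -
  obtain a where "x = (1, a, 0)" "a \<noteq> 0"
    using assms by (auto simp: lines_through_001_def)
  let ?f = "nonunit_digit (- 1 / a)"
  have Z: "zero_count points x = ?f + 1"
    using \<open>x = (1, a, 0)\<close> \<open>a \<noteq> 0\<close> by (simp add: zero_count_1a0)
  have "?f < q"
    using \<open>a \<noteq> 0\<close> by (simp add: nonunit_digit_less)
  then show "0 < zero_count points x" "zero_count points x \<le> q"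
    unfolding Z by simp_all
  show "zero_count points x \<noteq> zero_count points (0, 0, 1)"
  proof
    assume "zero_count points x = zero_count points (0, 0, 1)"
    then have "?f + 1 = digit_sum + q"
      unfolding Z zero_count_001 .
    with \<open>?f < q\<close> have "digit_sum = 0" "?f = q - 1"
      by linarith+
    then have "q = 2"
      using two_digit_sum q_ge_2 by (cases q) (simp_all add: mult_eq_if split: if_splits)
    with \<open>?f = q - 1\<close> show False
      by (simp add: nonunit_digit_def split: if_splits)
  qed
qed

lemma inj_on_zero_count_lines_through_001: "inj_on (zero_count points) lines_through_001"
proof (rule inj_onI)
  fix x y
  assume "x \<in> lines_through_001" "y \<in> lines_through_001" "zero_count points x = zero_count points y"
  then obtain a c where "x = (1, a, 0)" "y = (1, c, 0)" "a \<noteq> 0" "c \<noteq> 0"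
    and "nonunit_digit (- 1 / a) = nonunit_digit (- 1 / c)"
    by (auto simp: lines_through_001_def zero_count_1a0)
  moreover from this have "- 1 / a = - 1 / c"
    by (intro nonunit_digit_inj) simp_all
  ultimately show "x = y"
    by simp
qed

lemma lines_through_010_zero_count:
  assumes "x \<in> lines_through_010"
  shows "zero_count points x < q^2"
    and "zero_count points x mod q = 0"
    and "zero_count points x = 0 \<or> 2 * q \<le> zero_count points x"
    and "zero_count points x \<noteq> zero_count points (0, 0, 1)"
proof -
  obtain b where "x = (1, 0, b)" "b \<noteq> 0"
    using assms by (auto simp: lines_through_010_def)
  let ?g = "nonunit_digit (- 1 / b)"
  have Z: "zero_count points x = q * ?g"
    using \<open>x = (1, 0, b)\<close> \<open>b \<noteq> 0\<close> by (simp add: zero_count_10b)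
  have "?g < q"
    using \<open>b \<noteq> 0\<close> by (simp add: nonunit_digit_less)
  then show "zero_count points x < q^2"
    unfolding Z using q_ge_2 by (simp add: power2_eq_square)
  show "zero_count points x mod q = 0"
    unfolding Z by simp
  have "?g = 0 \<or> 2 \<le> ?g"
    using nonunit_digit_neq_1[of "- 1 / b"] by linarith
  then show "zero_count points x = 0 \<or> 2 * q \<le> zero_count points x"
    unfolding Z by auto
  show "zero_count points x \<noteq> zero_count points (0, 0, 1)"
  proof
    assume "zero_count points x = zero_count points (0, 0, 1)"
    then have "q * ?g = digit_sum + q"
      unfolding Z zero_count_001 .
    then have "q * (2 * ?g) + 2 = q * (q + 1)"
      using two_digit_sum q_ge_2 by (cases q) (simp_all add: algebra_simps)
    then have "q dvd 2"
      by (metis dvd_add_right_iff dvd_triv_left)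
    then have "q = 2"
      using q_ge_2 by (simp add: dvd_imp_le le_antisym)
    with \<open>q * ?g = digit_sum + q\<close> two_digit_sum show False
      by (simp add: nonunit_digit_def split: if_splits)
  qed
qed

lemma inj_on_zero_count_lines_through_010: "inj_on (zero_count points) lines_through_010"
proof (rule inj_onI)
  fix x y
  assume "x \<in> lines_through_010" "y \<in> lines_through_010" "zero_count points x = zero_count points y"
  then obtain b d where "x = (1, 0, b)" "y = (1, 0, d)" "b \<noteq> 0" "d \<noteq> 0"
    and "nonunit_digit (- 1 / b) = nonunit_digit (- 1 / d)"
    using q_ge_2 by (auto simp: lines_through_010_def zero_count_10b)
  moreover from this have "- 1 / b = - 1 / d"
    by (intro nonunit_digit_inj) simp_all
  ultimately show "x = y"
    by simp
qed

lemma zero_count_001_less: "zero_count points (0, 0, 1) < q^2"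
proof -
  have "2 * zero_count points (0, 0, 1) + 2 = q * q + q"
    using two_digit_sum q_ge_2 by (simp add: zero_count_001 algebra_simps)
  moreover have "q < q * q"
    using q_ge_2 by simp
  ultimately have "zero_count points (0, 0, 1) < q * q"
    by linarith
  then show ?thesis
    by (simp add: power2_eq_square)
qed

lemma zero_count_001_less_010: "zero_count points (0, 0, 1) < zero_count points (0, 1, 0)"
proof -
  have "digit_sum \<le> q * digit_sum"
    using q_ge_2 mult_le_mono1[of 1 q digit_sum] by simp
  then show ?thesis
    unfolding zero_count_001 zero_count_010 by linarith
qed

lemma zero_count_100_neq_010: "zero_count points (1, 0, 0) \<noteq> zero_count points (0, 1, 0)"
proof
  assume "zero_count points (1, 0, 0) = zero_count points (0, 1, 0)"
  then have "q * (q * (digit_sum + 1)) = 1 * (q * (digit_sum + 1))"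
    by (simp add: zero_count_100 zero_count_010 power2_eq_square algebra_simps)
  then show False
    using q_ge_2 by (subst (asm) mult_right_cancel) simp_all
qed

lemma inj_on_zero_count_large:
  "inj_on (zero_count points) (generic_lines \<union> lines_through_100 \<union> {(1, 0, 0)})"
proof (intro inj_on_Un_distinct_values inj_on_zero_count_generic_lines
    inj_on_zero_count_lines_through_100)
  show "zero_count points x \<noteq> zero_count points y"
    if "x \<in> generic_lines" "y \<in> lines_through_100" for x y
    using generic_lines_zero_count(3)[OF that(1)] lines_through_100_zero_count(3)[OF that(2)]
    by auto
  show "zero_count points x \<noteq> zero_count points y"
    if "x \<in> generic_lines \<union> lines_through_100" "y \<in> {(1, 0, 0)}" for x y
    using that zero_count_100_digits(2)
    by (auto dest: generic_lines_zero_count(2) lines_through_100_zero_count(2))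
qed simp

lemma inj_on_zero_count_small:
  "inj_on (zero_count points) (lines_through_001 \<union> lines_through_010 \<union> {(0, 0, 1)})"
proof (intro inj_on_Un_distinct_values inj_on_zero_count_lines_through_001
    inj_on_zero_count_lines_through_010)
  show "zero_count points x \<noteq> zero_count points y"
    if "x \<in> lines_through_001" "y \<in> lines_through_010" for x y
    using lines_through_001_zero_count(1,2)[OF that(1)] lines_through_010_zero_count(3)[OF that(2)]
    by auto
  show "zero_count points x \<noteq> zero_count points y"
    if "x \<in> lines_through_001 \<union> lines_through_010" "y \<in> {(0, 0, 1)}" for x y
    using that by (auto dest: lines_through_001_zero_count(3) lines_through_010_zero_count(4))
qed simp

text \<open>These lines meet the side \<open>x = 0\<close> in a point of multiplicity at least \<open>q^2\<close>.\<close>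

lemma zero_count_large_ge:
  "x \<in> generic_lines \<union> lines_through_100 \<union> {(1, 0, 0)} \<Longrightarrow> q^2 \<le> zero_count points x"
  using zero_count_100_digits(1)
  by (auto dest: generic_lines_zero_count(1) lines_through_100_zero_count(1))

lemma zero_count_small_less:
  "x \<in> lines_through_001 \<union> lines_through_010 \<union> {(0, 0, 1)} \<Longrightarrow> zero_count points x < q^2"
proof -
  have "q < q^2"
    using q_ge_2 by (simp add: power2_eq_square)
  then show "x \<in> lines_through_001 \<union> lines_through_010 \<union> {(0, 0, 1)} \<Longrightarrow> zero_count points x < q^2"
    using zero_count_001_less
    by (auto dest: lines_through_001_zero_count(2) lines_through_010_zero_count(1))
qed

lemma inj_on_zero_count_points: "inj_on (zero_count points) normalized_vectors"
proof -
  let ?large = "generic_lines \<union> lines_through_100 \<union> {(1, 0, 0)}"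
    and ?small = "lines_through_001 \<union> lines_through_010 \<union> {(0, 0, 1)}"
  have inj_large_small: "inj_on (zero_count points) (?large \<union> ?small)"
    using inj_on_zero_count_large inj_on_zero_count_small
  proof (rule inj_on_Un_distinct_values)
    show "zero_count points x \<noteq> zero_count points y" if "x \<in> ?large" "y \<in> ?small" for x y
      using zero_count_large_ge[OF that(1)] zero_count_small_less[OF that(2)] by simp
  qed
  have "zero_count points x \<noteq> zero_count points (0, 1, 0)" if "x \<in> ?large \<union> ?small" for x
    using that zero_count_010_digits zero_count_100_neq_010 zero_count_001_less_010
    by (auto dest: generic_lines_zero_count(2) lines_through_100_zero_count(2)
        lines_through_001_zero_count(2) lines_through_010_zero_count(2))
  then show ?thesis
    unfolding normalized_vectors_cases by (intro inj_on_Un_distinct_values[OF inj_large_small]) auto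
qed

lemma size_points: "size points = digit_sum + q * digit_sum + q^2 * (digit_sum + 1) + q + 1"
  by (simp add: points_def sum.distrib digit_sum_def sum_positive_digit flip: sum_distrib_left)

lemma real_size_points: "real (size points) = (real q - 1) / 2 * (real q ^ 3 + real q ^ 2 + real q)"
proof -
  have "2 * size points = (2 * digit_sum + 2) * (q^2 + q + 1)"
    by (simp add: size_points algebra_simps)
  also have "\<dots> = q * (q - 1) * (q^2 + q + 1)"
    by (simp only: two_digit_sum)
  finally have "2 * real (size points) = real q * real (q - 1) * (real q ^ 2 + real q + 1)"
    by (metis of_nat_1 of_nat_add of_nat_mult of_nat_numeral of_nat_power)
  also have "\<dots> = (real q - 1) * (real q ^ 3 + real q ^ 2 + real q)"
    using q_ge_2 by (simp add: of_nat_diff power2_eq_square power3_eq_cube algebra_simps)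
  finally show ?thesis
    by simp
qed

lemma zero_notin_points: "(0, 0, 0) \<notin># points"
  by (auto simp: points_def set_mset_sum)

lemma points_spanning: "\<forall>v\<in>#points. dot3 c v = 0 \<Longrightarrow> c = (0, 0, 0)"
proof -
  assume orth: "\<forall>v\<in>#points. dot3 c v = 0"
  have "(1, 0, 0) \<in># points" "(0, 0, 1) \<in># points"
    using q_ge_2 by (simp_all add: points_def)
  moreover have "(0, 1, 1) \<in># points"
    using q_ge_2 by (auto simp: points_def set_mset_sum positive_digit_def intro!: bexI[of _ 1])
  ultimately have "dot3 c (1, 0, 0) = 0" "dot3 c (0, 0, 1) = 0" "dot3 c (0, 1, 1) = 0"
    using orth by blast+
  then show "c = (0, 0, 0)"
    by (cases c) simp
qed

theorem is_MWS_code_points: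
  assumes "mset cols = points"
  shows "is_MWS_code (length cols) 3 (range (codeword cols))"
proof (rule is_MWS_code_codewords)
  show "(0, 0, 0) \<notin> set cols"
    using zero_notin_points by (simp flip: assms)
  show "c = (0, 0, 0)" if "\<forall>v\<in>set cols. dot3 c v = 0" for c
    using that points_spanning by (simp flip: assms)
  show "inj_on (zero_count (mset cols)) normalized_vectors"
    using inj_on_zero_count_points by (simp add: assms)
qed

end

theorem mainTheorem14:
  fixes q :: nat
  assumes "q = card (UNIV :: 'a::{field,finite} set)"
  shows "\<exists>(n::nat) (C :: (nat \<Rightarrow> 'a) set).
           is_MWS_code n 3 C \<and>
           real n \<le> (real q - 1) / 2 * (real q ^ 3 + real q ^ 2 + real q)"
proof -
  have "card (-{0::'a}) = card {..<q - 1}"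
    using assms by (simp add: Compl_eq_Diff_UNIV card_Diff_singleton)
  then obtain phi :: "'a \<Rightarrow> nat" where "bij_betw phi (-{0}) {..<q - 1}"
    using finite_same_card_bij[of "-{0::'a}" "{..<q - 1}"] by auto
  then interpret weighted_triangle q phi
    using assms by unfold_locales
  obtain cols where cols: "mset cols = points"
    using ex_mset by blast
  then have "is_MWS_code (length cols) 3 (range (codeword cols))"
    by (rule is_MWS_code_points)
  moreover have "real (length cols) = (real q - 1) / 2 * (real q ^ 3 + real q ^ 2 + real q)"
    using real_size_points by (simp flip: cols)
  ultimately show ?thesis
    by auto
qed

end
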